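(* Suppose $\psi\in\mathcal{B}$ is pseudoconcave on a neighbourhood of $+\infty$. Then there exists a concave function $\psi_{0}:(0,\infty)\to(0,\infty)$ such that $\psi/\psi_{0}$ and $\psi_{0}/\psi$ are bounded on $(\varepsilon,\infty)$ for every $\varepsilon>0$.
   Context: $\mathcal{B}$ is the set of Borel measurable $\psi:(0,\infty)\to(0,\infty)$ bounded on each compact $[a,b]\subset(0,\infty)$ and such that $1/\psi$ is bounded on each $[r,\infty)$, $r>0$. A function $\psi:(0,\infty)\to(0,\infty)$ is pseudoconcave on $(r,\infty)$ ($r\geq0$) if there is a concave $\psi_{1}:(r,\infty)\to(0,\infty)$ with $\psi/\psi_{1}$ and $\psi_{1}/\psi$ bounded on $(r,\infty)$; it is pseudoconcave on a neighbourhood of $+\infty$ if it is pseudoconcave on $(r,\infty)$ for some sufficiently large $r$. *)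

theory Defs
  imports "HOL-Analysis.Analysis"
begin

text \<open>Functions (0,inf) -> (0,inf) are represented as real => real; only values on
  {0<..} matter.\<close>

definition class_B :: "(real \<Rightarrow> real) \<Rightarrow> bool" where
  "class_B \<psi> \<longleftrightarrow>
     \<psi> \<in> borel_measurable (restrict_space borel {0<..}) \<and>
     (\<forall>x>0. \<psi> x > 0) \<and>
     (\<forall>a b. 0 < a \<longrightarrow> a \<le> b \<longrightarrow> (\<exists>C. \<forall>x\<in>{a..b}. \<psi> x \<le> C)) \<and>
     (\<forall>r>0. \<exists>C. \<forall>x\<in>{r..}. 1 / \<psi> x \<le> C)"

definition bounded_on :: "(real \<Rightarrow> real) \<Rightarrow> real set \<Rightarrow> bool" where
  "bounded_on f S \<longleftrightarrow> (\<exists>C. \<forall>x\<in>S. \<bar>f x\<bar> \<le> C)"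

definition pseudoconcave_on :: "(real \<Rightarrow> real) \<Rightarrow> real \<Rightarrow> bool" where
  "pseudoconcave_on \<psi> r \<longleftrightarrow>
     (\<exists>\<psi>1. concave_on {r<..} \<psi>1 \<and> (\<forall>x>r. \<psi>1 x > 0) \<and>
          bounded_on (\<lambda>x. \<psi> x / \<psi>1 x) {r<..} \<and>
          bounded_on (\<lambda>x. \<psi>1 x / \<psi> x) {r<..})"

definition pseudoconcave_near_infinity :: "(real \<Rightarrow> real) \<Rightarrow> bool" where
  "pseudoconcave_near_infinity \<psi> \<longleftrightarrow> (\<exists>r\<ge>0. pseudoconcave_on \<psi> r)"

end

theory Submission
  imports Defs
begin

text \<open>Shift the concave comparison function: if \<open>\<psi>1\<close> is concave and positive on \<open>(r,\<infinity>)\<close>,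
  then \<open>\<psi>0 x = \<psi>1 (x + r + 1)\<close> is concave and positive on \<open>(0,\<infinity>)\<close>. A positive concave
  function can neither drop by more than a factor 2 nor grow faster than linearly, so \<open>\<psi>1\<close> is
  comparable with its shifts near \<open>\<infinity>\<close>, hence \<open>\<psi>0\<close> is comparable with \<open>\<psi>\<close> there. On the
  remaining compact intervals \<open>[\<epsilon>, r + 1]\<close> the function \<open>\<psi>0\<close> is continuous and positive,
  while \<open>\<psi>\<close> is bounded above and away from zero by the definition of \<open>\<B>\<close>.\<close>

lemma bounded_on_subset: "bounded_on f T \<Longrightarrow> S \<subseteq> T \<Longrightarrow> bounded_on f S"
  unfolding bounded_on_def by blast

lemma bounded_on_Un: "bounded_on f S \<Longrightarrow> bounded_on f T \<Longrightarrow> bounded_on f (S \<union> T)"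
  unfolding bounded_on_def by (metis Un_iff max.coboundedI1 max.coboundedI2)

lemma bounded_on_ratio_trans:
  assumes "bounded_on (\<lambda>x. a x / b x) S" "bounded_on (\<lambda>x. b x / c x) S"
    and "\<forall>x\<in>S. b x \<noteq> 0"
  shows "bounded_on (\<lambda>x. a x / c x) S"
proof -
  obtain C1 C2 where C1: "\<forall>x\<in>S. \<bar>a x / b x\<bar> \<le> C1" and C2: "\<forall>x\<in>S. \<bar>b x / c x\<bar> \<le> C2"
    using assms(1,2) unfolding bounded_on_def by blast
  have "\<bar>a x / c x\<bar> \<le> C1 * C2" if "x \<in> S" for x
  proof -
    have "b x \<noteq> 0" using assms(3) that by blast
    then have "a x / c x = (a x / b x) * (b x / c x)" by simp
    then have "\<bar>a x / c x\<bar> = \<bar>a x / b x\<bar> * \<bar>b x / c x\<bar>"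
      by (metis abs_mult)
    also have "\<dots> \<le> C1 * C2"
    proof (rule mult_mono)
      show "\<bar>a x / b x\<bar> \<le> C1" "\<bar>b x / c x\<bar> \<le> C2"
        using C1 C2 that by blast+
      then show "0 \<le> C1" by (meson abs_ge_zero order_trans)
    qed simp
    finally show ?thesis .
  qed
  then show ?thesis unfolding bounded_on_def by blast
qed

lemma bounded_on_ratioI:
  assumes "\<And>x. x \<in> S \<Longrightarrow> 0 < b x" "\<And>x. x \<in> S \<Longrightarrow> 0 \<le> a x"
    and "\<And>x. x \<in> S \<Longrightarrow> a x \<le> K * b x"
  shows "bounded_on (\<lambda>x. a x / b x) S"
  unfolding bounded_on_def
proof (intro exI ballI)
  fix x assume "x \<in> S"
  then show "\<bar>a x / b x\<bar> \<le> K"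
    using assms[of x] by (simp add: pos_divide_le_eq)
qed

lemma concave_on_shift:
  fixes f :: "real \<Rightarrow> real"
  assumes "concave_on {a<..} f"
  shows "concave_on {a - c<..} (\<lambda>x. f (x + c))"
proof (rule concave_on_linorderI)
  fix t x y :: real
  assume t: "0 < t" "t < 1" and xy: "x \<in> {a - c<..}" "y \<in> {a - c<..}"
  have "(1 - t) * f (x + c) + t * f (y + c) \<le> f ((1 - t) *\<^sub>R (x + c) + t *\<^sub>R (y + c))"
    using concave_onD[OF assms, of t "x + c" "y + c"] t xy by auto
  also have "(1 - t) *\<^sub>R (x + c) + t *\<^sub>R (y + c) = (1 - t) *\<^sub>R x + t *\<^sub>R y + c"
    by (simp add: algebra_simps)
  finally show "(1 - t) * f (x + c) + t * f (y + c) \<le> f ((1 - t) *\<^sub>R x + t *\<^sub>R y + c)" .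
qed simp

lemma concave_on_continuous:
  fixes f :: "real \<Rightarrow> real"
  assumes "open S" "concave_on S f"
  shows "continuous_on S f"
proof -
  have "continuous_on S (\<lambda>x. - (- f x))"
    using assms by (intro continuous_on_minus convex_on_continuous) (auto simp: concave_on_def)
  then show ?thesis by simp
qed

lemma concave_pos_le_double_shift:
  fixes f :: "real \<Rightarrow> real"
  assumes c: "concave_on {r<..} f" and pos: "\<forall>x>r. f x > 0"
    and x: "r < x" and R: "0 \<le> R"
  shows "f x \<le> 2 * f (x + R)"
proof -
  have "(1 - 1/2) * f x + (1/2) * f (x + 2*R) \<le> f ((1 - 1/2) *\<^sub>R x + (1/2) *\<^sub>R (x + 2*R))"
    using concave_onD[OF c, of "1/2" x "x + 2*R"] x R by auto
  moreover have "(1 - 1/2) *\<^sub>R x + (1/2) *\<^sub>R (x + 2*R) = x + R"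
    by (simp add: field_simps)
  moreover have "f (x + 2*R) > 0"
    using pos x R by auto
  ultimately show ?thesis by simp
qed

lemma concave_pos_shift_growth:
  fixes f :: "real \<Rightarrow> real"
  assumes c: "concave_on {r<..} f" and pos: "\<forall>x>r. f x > 0"
    and u: "r < u" "u < x" and R: "0 \<le> R"
  shows "(x - u) * f (x + R) \<le> (x + R - u) * f x"
proof -
  define t where "t = (x - u) / (x + R - u)"
  have d: "x + R - u > 0" using u R by simp
  have t: "0 \<le> t" "t \<le> 1" using u R by (auto simp: t_def field_simps)
  have "t * (x + R - u) = x - u"
    using d by (simp add: t_def)
  then have "(1 - t) *\<^sub>R u + t *\<^sub>R (x + R) = x"
    by (simp add: algebra_simps)
  then have "(1 - t) * f u + t * f (x + R) \<le> f x"
    using concave_onD[OF c, of t u "x + R"] t u R by auto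
  moreover have "0 \<le> (1 - t) * f u"
    using pos u(1) t by (metis diff_ge_0_iff_ge less_imp_le mult_nonneg_nonneg)
  ultimately have "t * f (x + R) \<le> f x" by linarith
  then show ?thesis
    using d by (simp add: t_def field_simps)
qed

lemma concave_pos_comparable_shift:
  fixes f :: "real \<Rightarrow> real"
  assumes c: "concave_on {r<..} f" and pos: "\<forall>x>r. f x > 0"
    and a: "r < a" and R: "0 \<le> R"
  shows "bounded_on (\<lambda>x. f x / f (x + R)) {a..}"
    and "bounded_on (\<lambda>x. f (x + R) / f x) {a..}"
proof -
  have fpos: "0 < f x" "0 < f (x + R)" if "a \<le> x" for x
    using pos a R that by auto
  show "bounded_on (\<lambda>x. f x / f (x + R)) {a..}"
    using concave_pos_le_double_shift[OF c pos _ R] fpos a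
    by (intro bounded_on_ratioI[where K = 2]) (auto simp: less_imp_le)
  define u where "u = (r + a) / 2"
  have u: "r < u" "u < a" using a by (auto simp: u_def)
  have "f (x + R) \<le> (1 + R / (a - u)) * f x" if x: "a \<le> x" for x
  proof -
    have "0 < f x" using fpos x by blast
    have "f (x + R) \<le> (x + R - u) / (x - u) * f x"
      using concave_pos_shift_growth[OF c pos _ _ R, of u x] u x
      by (simp add: field_simps)
    also have "(x + R - u) / (x - u) = 1 + R / (x - u)"
      using u x by (simp add: field_simps)
    also have "\<dots> * f x \<le> (1 + R / (a - u)) * f x"
      using u x R \<open>0 < f x\<close> by (intro mult_right_mono add_left_mono divide_left_mono) auto
    finally show ?thesis .
  qed
  then show "bounded_on (\<lambda>x. f (x + R) / f x) {a..}"
    using fpos by (intro bounded_on_ratioI) (auto simp: less_imp_le)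
qed

lemma class_B_comparable_Icc:
  assumes B: "class_B \<psi>" and a: "0 < a"
    and g: "continuous_on {a..b} g" "\<forall>x\<in>{a..b}. g x > 0"
  shows "bounded_on (\<lambda>x. \<psi> x / g x) {a..b}"
    and "bounded_on (\<lambda>x. g x / \<psi> x) {a..b}"
proof -
  have \<psi>pos: "\<forall>x>0. \<psi> x > 0"
    and ub: "\<forall>a b. 0 < a \<longrightarrow> a \<le> b \<longrightarrow> (\<exists>M. \<forall>x\<in>{a..b}. \<psi> x \<le> M)"
    and lb: "\<forall>r>0. \<exists>C. \<forall>x\<in>{r..}. 1 / \<psi> x \<le> C"
    using B unfolding class_B_def by auto
  obtain M where M: "\<forall>x\<in>{a..b}. \<psi> x \<le> M"
  proof (cases "a \<le> b")
    case True
    then show ?thesis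
      using ub[rule_format, OF a True] that by blast
  qed (use that in auto)
  obtain C where C: "\<forall>x\<in>{a..}. 1 / \<psi> x \<le> C"
    using lb[rule_format, OF a] by blast
  obtain G where G: "\<And>x. x \<in> {a..b} \<Longrightarrow> norm (g x) \<le> G"
    using continuous_on_compact_bound[OF compact_Icc g(1)] by blast
  have "continuous_on {a..b} (\<lambda>x. 1 / g x)"
    using g by (intro continuous_intros) auto
  then obtain H where H: "\<And>x. x \<in> {a..b} \<Longrightarrow> norm (1 / g x) \<le> H"
    using continuous_on_compact_bound[OF compact_Icc] by blast
  have pos: "0 < g x" "0 < \<psi> x" if "x \<in> {a..b}" for x
    using g(2) \<psi>pos a that by auto
  show "bounded_on (\<lambda>x. \<psi> x / g x) {a..b}"
  proof (rule bounded_on_ratioI[where K = "M * H"])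
    fix x assume x: "x \<in> {a..b}"
    have "\<psi> x \<le> M" using M x by blast
    then have "\<psi> x * (1 / g x) \<le> M * (1 / g x)"
      using pos[OF x] by (intro mult_right_mono) auto
    also have "\<dots> \<le> M * H"
      using H[OF x] pos[OF x] \<open>\<psi> x \<le> M\<close> by (intro mult_left_mono) auto
    finally show "\<psi> x \<le> M * H * g x"
      using pos[OF x] by (simp add: field_simps)
  qed (use pos in \<open>auto simp: less_imp_le\<close>)
  show "bounded_on (\<lambda>x. g x / \<psi> x) {a..b}"
  proof (rule bounded_on_ratioI[where K = "G * C"])
    fix x assume x: "x \<in> {a..b}"
    have "g x * (1 / \<psi> x) \<le> G * (1 / \<psi> x)"
      using G[OF x] pos[OF x] by (intro mult_right_mono) auto
    also have "\<dots> \<le> G * C"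
      using C G[OF x] pos[OF x] x by (intro mult_left_mono) auto
    finally show "g x \<le> G * C * \<psi> x"
      using pos[OF x] by (simp add: field_simps)
  qed (use pos in \<open>auto simp: less_imp_le\<close>)
qed

lemma pseudoconcave_comparable_shift:
  fixes f :: "real \<Rightarrow> real"
  assumes c: "concave_on {r<..} f" and fpos: "\<forall>x>r. f x > 0"
    and \<psi>f: "bounded_on (\<lambda>x. \<psi> x / f x) {r<..}" and f\<psi>: "bounded_on (\<lambda>x. f x / \<psi> x) {r<..}"
    and a: "r < a" and R: "0 \<le> R"
  shows "bounded_on (\<lambda>x. \<psi> x / f (x + R)) {a..}"
    and "bounded_on (\<lambda>x. f (x + R) / \<psi> x) {a..}"
proof -
  have sub: "{a..} \<subseteq> {r<..}"
    using a by auto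
  then have nonzero: "\<forall>x\<in>{a..}. f x \<noteq> 0"
    using fpos by force
  then show "bounded_on (\<lambda>x. \<psi> x / f (x + R)) {a..}"
    by (rule bounded_on_ratio_trans[OF bounded_on_subset[OF \<psi>f sub]
          concave_pos_comparable_shift(1)[OF c fpos a R]])
  from nonzero show "bounded_on (\<lambda>x. f (x + R) / \<psi> x) {a..}"
    by (rule bounded_on_ratio_trans[OF concave_pos_comparable_shift(2)[OF c fpos a R]
          bounded_on_subset[OF f\<psi> sub]])
qed

lemma class_B_comparable_Ioi:
  assumes B: "class_B \<psi>" and \<epsilon>: "0 < \<epsilon>"
    and g: "continuous_on {0<..} g" "\<forall>x>0. g x > 0"
    and \<psi>g: "bounded_on (\<lambda>x. \<psi> x / g x) {a..}" and g\<psi>: "bounded_on (\<lambda>x. g x / \<psi> x) {a..}"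
  shows "bounded_on (\<lambda>x. \<psi> x / g x) {\<epsilon><..}"
    and "bounded_on (\<lambda>x. g x / \<psi> x) {\<epsilon><..}"
proof -
  have "continuous_on {\<epsilon>..a} g"
    by (rule continuous_on_subset[OF g(1)]) (use \<epsilon> in auto)
  then have near: "bounded_on (\<lambda>x. \<psi> x / g x) {\<epsilon>..a}" "bounded_on (\<lambda>x. g x / \<psi> x) {\<epsilon>..a}"
    using class_B_comparable_Icc[OF B \<epsilon>] g(2) \<epsilon> by auto
  have cover: "{\<epsilon><..} \<subseteq> {\<epsilon>..a} \<union> {a..}" by auto
  show "bounded_on (\<lambda>x. \<psi> x / g x) {\<epsilon><..}"
    using bounded_on_subset[OF bounded_on_Un[OF near(1) \<psi>g] cover] .
  show "bounded_on (\<lambda>x. g x / \<psi> x) {\<epsilon><..}"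
    using bounded_on_subset[OF bounded_on_Un[OF near(2) g\<psi>] cover] .
qed

theorem proposition4:
  fixes \<psi> :: "real \<Rightarrow> real"
  assumes "class_B \<psi>"
    and "pseudoconcave_near_infinity \<psi>"
  shows "\<exists>\<psi>0. concave_on {0<..} \<psi>0 \<and> (\<forall>x>0. \<psi>0 x > 0) \<and>
           (\<forall>\<epsilon>>0. bounded_on (\<lambda>x. \<psi> x / \<psi>0 x) {\<epsilon><..} \<and>
                   bounded_on (\<lambda>x. \<psi>0 x / \<psi> x) {\<epsilon><..})"
proof -
  obtain r f where r: "r \<ge> 0" and c: "concave_on {r<..} f" and fpos: "\<forall>x>r. f x > 0"
    and \<psi>f: "bounded_on (\<lambda>x. \<psi> x / f x) {r<..}" and f\<psi>: "bounded_on (\<lambda>x. f x / \<psi> x) {r<..}"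
    using assms(2) unfolding pseudoconcave_near_infinity_def pseudoconcave_on_def by blast
  define a where "a = r + 1"
  define g where "g = (\<lambda>x. f (x + a))"
  have "concave_on {-1<..} g"
    using concave_on_shift[OF c, of a] by (simp add: g_def a_def)
  then have g_concave: "concave_on {0<..} g"
    unfolding concave_on_def by (rule convex_on_subset) auto
  have gpos: "\<forall>x>0. g x > 0"
    using fpos r by (simp add: g_def a_def)
  have "r < a" "0 \<le> a"
    using r by (auto simp: a_def)
  then have far: "bounded_on (\<lambda>x. \<psi> x / g x) {a..}" "bounded_on (\<lambda>x. g x / \<psi> x) {a..}"
    unfolding g_def using pseudoconcave_comparable_shift[OF c fpos \<psi>f f\<psi>] by blast+
  show ?thesis
    using class_B_comparable_Ioi[OF assms(1) _ concave_on_continuous[OF open_greaterThan g_concave] gpos far]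
      g_concave gpos by blast
qed

end
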